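(* Let $S,T$ be left inverse semi-braces and $\sigma:T\to\mathrm{Aut}(S)$ a homomorphism from $(T,\cdot)$ into the automorphism group of the left inverse semi-brace $S$; write ${}^ua=\sigma(u)(a)$. Then $S\times T$ with $$(a,u)+(b,v)=(a+b,\,u+v),\qquad (a,u)(b,v)=(a\,{}^ub,\,uv)$$ for all $(a,u),(b,v)\in S\times T$, is a left inverse semi-brace (the semidirect product $S\rtimes_\sigma T$).
   Context: An inverse semigroup is a semigroup $(S,\cdot)$ in which for each $a$ there is a unique $a^{-1}$ with $aa^{-1}a=a$, $a^{-1}aa^{-1}=a^{-1}$. A left inverse semi-brace is a triple $(S,+,\cdot)$ with $(S,+)$ a semigroup (not necessarily commutative), $(S,\cdot)$ an inverse semigroup and $a(b+c)=ab+a(a^{-1}+c)$ for all $a,b,c\in S$. An automorphism of the left inverse semi-brace $S$ is a bijection $S\to S$ preserving both $+$ and $\cdot$. *)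

theory Defs
  imports Main
begin

definition inverse_semigroup :: "('a \<Rightarrow> 'a \<Rightarrow> 'a) \<Rightarrow> bool" where
  "inverse_semigroup m \<longleftrightarrow>
     (\<forall>a b c. m (m a b) c = m a (m b c)) \<and>
     (\<forall>a. \<exists>!b. m (m a b) a = a \<and> m (m b a) b = b)"

definition inv_of :: "('a \<Rightarrow> 'a \<Rightarrow> 'a) \<Rightarrow> 'a \<Rightarrow> 'a" where
  "inv_of m a = (THE b. m (m a b) a = a \<and> m (m b a) b = b)"

definition left_inverse_semi_brace :: "('a \<Rightarrow> 'a \<Rightarrow> 'a) \<Rightarrow> ('a \<Rightarrow> 'a \<Rightarrow> 'a) \<Rightarrow> bool" where
  "left_inverse_semi_brace add mult \<longleftrightarrow>
     (\<forall>a b c. add (add a b) c = add a (add b c)) \<and>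
     inverse_semigroup mult \<and>
     (\<forall>a b c. mult a (add b c) = add (mult a b) (mult a (add (inv_of mult a) c)))"

definition semi_brace_automorphism ::
  "('a \<Rightarrow> 'a \<Rightarrow> 'a) \<Rightarrow> ('a \<Rightarrow> 'a \<Rightarrow> 'a) \<Rightarrow> ('a \<Rightarrow> 'a) \<Rightarrow> bool" where
  "semi_brace_automorphism add mult f \<longleftrightarrow>
     bij f \<and> (\<forall>a b. f (add a b) = add (f a) (f b)) \<and> (\<forall>a b. f (mult a b) = mult (f a) (f b))"

end

theory Submission
  imports Defs
begin

text \<open>The candidate inverse of \<open>(a, u)\<close> is \<open>(\<sigma> u' a', u')\<close>, primes denoting inverses
  in \<open>S\<close> and \<open>T\<close>. Since \<open>u u'\<close> is idempotent and \<open>\<sigma>\<close> acts by injective maps,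
  \<open>\<sigma> (u u')\<close> is the identity; with this, regularity, uniqueness of inverses and the
  semi-brace law of the product reduce componentwise to those of \<open>S\<close> and \<open>T\<close>.\<close>

lemma inverse_semigroup_assoc:
  "inverse_semigroup m \<Longrightarrow> m (m a b) c = m a (m b c)"
  unfolding inverse_semigroup_def by blast

lemma inverse_semigroup_inv_of:
  assumes "inverse_semigroup m"
  shows "m (m a (inv_of m a)) a = a \<and> m (m (inv_of m a) a) (inv_of m a) = inv_of m a"
proof -
  have "\<exists>!b. m (m a b) a = a \<and> m (m b a) b = b"
    using assms unfolding inverse_semigroup_def by blast
  then show ?thesis unfolding inv_of_def by (rule theI')
qed

lemma inv_of_unique:
  assumes "inverse_semigroup m" "m (m a b) a = a" "m (m b a) b = b"
  shows "inv_of m a = b"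
proof -
  have "\<exists>!b. m (m a b) a = a \<and> m (m b a) b = b"
    using assms(1) unfolding inverse_semigroup_def by blast
  then show ?thesis unfolding inv_of_def using assms(2,3) by (blast intro: the1_equality)
qed

lemma inverse_semigroupI:
  assumes "\<And>a b c. m (m a b) c = m a (m b c)"
    and "\<And>a. m (m a (i a)) a = a" "\<And>a. m (m (i a) a) (i a) = i a"
    and "\<And>a b. m (m a b) a = a \<Longrightarrow> m (m b a) b = b \<Longrightarrow> b = i a"
  shows "inverse_semigroup m"
  unfolding inverse_semigroup_def using assms by metis

lemma inverse_semigroup_idempotent:
  assumes "inverse_semigroup m" "m (m a b) a = a"
  shows "m (m a b) (m a b) = m a b"
  using assms by (metis inverse_semigroup_assoc)

definition semidirect_mult ::
  "('a \<Rightarrow> 'a \<Rightarrow> 'a) \<Rightarrow> ('b \<Rightarrow> 'b \<Rightarrow> 'b) \<Rightarrow> ('b \<Rightarrow> 'a \<Rightarrow> 'a) \<Rightarrow> 'a \<times> 'b \<Rightarrow> 'a \<times> 'b \<Rightarrow> 'a \<times> 'b"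
  where "semidirect_mult multS multT \<sigma> = (\<lambda>(a, u) (b, v). (multS a (\<sigma> u b), multT u v))"

lemma semidirect_mult_Pair [simp]:
  "semidirect_mult multS multT \<sigma> (a, u) (b, v) = (multS a (\<sigma> u b), multT u v)"
  by (simp add: semidirect_mult_def)

locale inverse_semigroup_action =
  fixes multS :: "'a \<Rightarrow> 'a \<Rightarrow> 'a" and multT :: "'b \<Rightarrow> 'b \<Rightarrow> 'b" and \<sigma> :: "'b \<Rightarrow> 'a \<Rightarrow> 'a"
  assumes inverse_S: "inverse_semigroup multS"
    and inverse_T: "inverse_semigroup multT"
    and inj_act: "inj (\<sigma> u)"
    and act_mult: "\<sigma> u (multS a b) = multS (\<sigma> u a) (\<sigma> u b)"
    and act_comp: "\<sigma> (multT u v) = \<sigma> u \<circ> \<sigma> v"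
begin

abbreviation M :: "'a \<times> 'b \<Rightarrow> 'a \<times> 'b \<Rightarrow> 'a \<times> 'b"
  where "M \<equiv> semidirect_mult multS multT \<sigma>"

lemma act_act: "\<sigma> u (\<sigma> v a) = \<sigma> (multT u v) a"
  by (simp add: act_comp)

lemma act_idempotent:
  assumes "multT e e = e"
  shows "\<sigma> e = id"
proof
  fix a
  have "\<sigma> e (\<sigma> e a) = \<sigma> e a" using act_act[of e e a] assms by simp
  then show "\<sigma> e a = id a" using inj_act[of e] by (simp add: inj_eq)
qed

lemma act_regular_id:
  assumes "multT (multT u v) u = u"
  shows "\<sigma> (multT u v) = id"
  using act_idempotent inverse_semigroup_idempotent[OF inverse_T assms] .

lemma act_inv_of_cancel: "\<sigma> u (\<sigma> (inv_of multT u) a) = a"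
  using act_regular_id inverse_semigroup_inv_of[OF inverse_T] by (simp add: act_act)

lemma semidirect_assoc: "M (M x y) z = M x (M y z)"
  by (cases x; cases y; cases z)
    (simp add: inverse_semigroup_assoc[OF inverse_S] inverse_semigroup_assoc[OF inverse_T]
      act_mult act_act)

definition semidirect_inv :: "'a \<times> 'b \<Rightarrow> 'a \<times> 'b"
  where "semidirect_inv = (\<lambda>(a, u). (\<sigma> (inv_of multT u) (inv_of multS a), inv_of multT u))"

lemma semidirect_inv_regular:
  "M (M x (semidirect_inv x)) x = x \<and>
   M (M (semidirect_inv x) x) (semidirect_inv x) = semidirect_inv x"
proof (cases x)
  case (Pair a u)
  let ?u' = "inv_of multT u" and ?a' = "inv_of multS a"
  have u: "multT (multT u ?u') u = u" "multT (multT ?u' u) ?u' = ?u'"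
    using inverse_semigroup_inv_of[OF inverse_T] by blast+
  have a: "multS (multS a ?a') a = a" "multS (multS ?a' a) ?a' = ?a'"
    using inverse_semigroup_inv_of[OF inverse_S] by blast+
  have "\<sigma> ?u' (multS (multS ?a' a) ?a') = \<sigma> ?u' ?a'" using a(2) by simp
  then show ?thesis
    using a(1) u by (simp add: Pair semidirect_inv_def act_inv_of_cancel act_act act_mult
        act_regular_id)
qed

lemma semidirect_inv_unique:
  assumes "M (M x y) x = x" "M (M y x) y = y"
  shows "y = semidirect_inv x"
proof -
  obtain a u b v where xy: "x = (a, u)" "y = (b, v)" by fastforce
  have u: "multT (multT u v) u = u" "multT (multT v u) v = v"
    using assms unfolding xy by simp_all
  have id_uv: "\<sigma> (multT u v) = id" and id_vu: "\<sigma> (multT v u) = id"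
    using act_regular_id u by blast+
  have a: "multS (multS a (\<sigma> u b)) a = a"
    using assms(1) unfolding xy by (simp add: act_act id_uv)
  have "multS (multS b (\<sigma> v a)) b = b"
    using assms(2) unfolding xy by (simp add: act_act id_vu)
  then have "\<sigma> u (multS (multS b (\<sigma> v a)) b) = \<sigma> u b" by simp
  then have b: "multS (multS (\<sigma> u b) a) (\<sigma> u b) = \<sigma> u b"
    by (simp add: act_mult act_act id_uv)
  have "b = \<sigma> v (\<sigma> u b)" by (simp add: act_act id_vu)
  then show ?thesis
    using inv_of_unique[OF inverse_T u] inv_of_unique[OF inverse_S a b]
    by (simp add: xy semidirect_inv_def)
qed

lemma inverse_semigroup_semidirect: "inverse_semigroup M"
  using semidirect_assoc semidirect_inv_regular semidirect_inv_unique
  by (intro inverse_semigroupI) blast+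

lemma inv_of_semidirect:
  "inv_of M (a, u) = (\<sigma> (inv_of multT u) (inv_of multS a), inv_of multT u)"
proof -
  have "inv_of M (a, u) = semidirect_inv (a, u)"
    using inv_of_unique[OF inverse_semigroup_semidirect] semidirect_inv_regular by blast
  then show ?thesis by (simp add: semidirect_inv_def)
qed

end

lemma left_inverse_semi_brace_semidirect:
  assumes S: "left_inverse_semi_brace addS multS"
    and T: "left_inverse_semi_brace addT multT"
    and action: "inverse_semigroup_action multS multT \<sigma>"
    and act_add: "\<And>u a b. \<sigma> u (addS a b) = addS (\<sigma> u a) (\<sigma> u b)"
  shows "left_inverse_semi_brace (\<lambda>(a, u) (b, v). (addS a b, addT u v))
           (semidirect_mult multS multT \<sigma>)" (is "left_inverse_semi_brace ?A ?M")
proof -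
  interpret inverse_semigroup_action multS multT \<sigma> by (fact action)
  have "addS (addS a b) c = addS a (addS b c)" "addT (addT u v) w = addT u (addT v w)"
    for a b c u v w
    using S T unfolding left_inverse_semi_brace_def by blast+
  then have "?A (?A x y) z = ?A x (?A y z)" for x y z
    by (cases x; cases y; cases z) simp
  moreover have "?M x (?A y z) = ?A (?M x y) (?M x (?A (inv_of ?M x) z))" for x y z
  proof -
    obtain a u b v c w where xyz: "x = (a, u)" "y = (b, v)" "z = (c, w)" by (metis prod.exhaust)
    \<comment> \<open>the brace laws are instantiated by hand: as rewrite rules they would loop\<close>
    have "multS a (addS (\<sigma> u b) (\<sigma> u c)) =
        addS (multS a (\<sigma> u b)) (multS a (addS (inv_of multS a) (\<sigma> u c)))"
      using S unfolding left_inverse_semi_brace_def by blast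
    moreover have "multT u (addT v w) = addT (multT u v) (multT u (addT (inv_of multT u) w))"
      using T unfolding left_inverse_semi_brace_def by blast
    ultimately show ?thesis
      by (simp add: xyz inv_of_semidirect act_add act_inv_of_cancel)
  qed
  ultimately show ?thesis
    unfolding left_inverse_semi_brace_def using inverse_semigroup_semidirect by blast
qed

theorem corollary31:
  fixes addS multS :: "'a \<Rightarrow> 'a \<Rightarrow> 'a"
    and addT multT :: "'b \<Rightarrow> 'b \<Rightarrow> 'b"
    and \<sigma> :: "'b \<Rightarrow> 'a \<Rightarrow> 'a"
  assumes "left_inverse_semi_brace addS multS"
    and "left_inverse_semi_brace addT multT"
    and "\<forall>u. semi_brace_automorphism addS multS (\<sigma> u)"
    and "\<forall>u v. \<sigma> (multT u v) = \<sigma> u \<circ> \<sigma> v"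
  shows "left_inverse_semi_brace
           (\<lambda>(a, u) (b, v). (addS a b, addT u v))
           (\<lambda>(a, u) (b, v). (multS a (\<sigma> u b), multT u v))"
proof -
  have "inverse_semigroup_action multS multT \<sigma>"
    using assms unfolding inverse_semigroup_action_def left_inverse_semi_brace_def
      semi_brace_automorphism_def bij_def by blast
  moreover have "\<sigma> u (addS a b) = addS (\<sigma> u a) (\<sigma> u b)" for u a b
    using assms(3) unfolding semi_brace_automorphism_def by blast
  ultimately show ?thesis
    using left_inverse_semi_brace_semidirect[OF assms(1,2)] by (simp only: semidirect_mult_def)
qed

end
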